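(* Fix $a\in(0,1/2)$ and $b\in(0,1)$. There exist constants $c_1>0$ and $c_2>0$ (independent of $n$) such that for all sufficiently large $n$, the random-neighbor variant process on the complete graph $K_n$ with root $r$ satisfies $\Pr[\tau_{\mathrm{conv}}\ge c_2n]\ge c_1a$.
   Context: Random-neighbor variant. Fix $a,b\in[0,1]$, a connected graph $G=(V,E)$ and a root $r$. Labels $f_t:V\to\{+1,-1,\bot\}$ with $f_t(r)=+1$ for all $t$ and $f_0(v)=\bot$ for $v\ne r$. For $t\ge1$ and each $v\neq r$ independently, let $N_{t-1}(v)=\{u:(u,v)\in E,\ f_{t-1}(u)\ne\bot\}$. If $f_{t-1}(v)=\bot$ and $N_{t-1}(v)=\emptyset$, then $f_t(v)=\bot$. If $f_{t-1}(v)=\bot$ and $N_{t-1}(v)\neq\emptyset$, pick $w$ uniformly from $N_{t-1}(v)$ and set $f_t(v)=f_{t-1}(w)$ w.p. $1-a$ and $-f_{t-1}(w)$ w.p. $a$. If $f_{t-1}(v)\ne\bot$, pick $w$ uniformly at random from $N_{t-1}(v)$ (afresh every round) and set $f_t(v)=f_{t-1}(w)$ w.p. $b$ and $f_t(v)=f_{t-1}(v)$ w.p. $1-b$. The convergence time is $\tau_{\mathrm{conv}}=\min\{t: f_t(v)=+1\ \forall v\in V\}$. *)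

theory Defs
  imports "HOL-Probability.Probability"
begin

datatype label = Pos | Neg | Bot

fun lneg :: "label \<Rightarrow> label" where
  "lneg Pos = Neg" | "lneg Neg = Pos" | "lneg Bot = Bot"

text \<open>Complete graph K_n on vertex set {0..<n}: u, v adjacent iff u \<noteq> v.
  Labelled neighbourhood N_{t-1}(v).\<close>
definition nbrs :: "nat \<Rightarrow> (nat \<Rightarrow> label) \<Rightarrow> nat \<Rightarrow> nat set" where
  "nbrs n f v = {u. u < n \<and> u \<noteq> v \<and> f u \<noteq> Bot}"

definition vupdate :: "real \<Rightarrow> real \<Rightarrow> nat \<Rightarrow> (nat \<Rightarrow> label) \<Rightarrow> nat \<Rightarrow> label pmf" where
  "vupdate a b n f v =
     (if nbrs n f v = {} then return_pmf (f v)
      else if f v = Bot then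
        do { w \<leftarrow> pmf_of_set (nbrs n f v);
             c \<leftarrow> bernoulli_pmf a;
             return_pmf (if c then lneg (f w) else f w) }
      else
        do { w \<leftarrow> pmf_of_set (nbrs n f v);
             c \<leftarrow> bernoulli_pmf b;
             return_pmf (if c then f w else f v) })"

text \<open>One synchronous round: all vertices updated independently; root fixed at +1.
  Values outside {0..<n} are irrelevant and kept at Bot.\<close>
definition step :: "real \<Rightarrow> real \<Rightarrow> nat \<Rightarrow> nat \<Rightarrow> (nat \<Rightarrow> label) \<Rightarrow> (nat \<Rightarrow> label) pmf" where
  "step a b n r f = Pi_pmf {..<n} Bot
      (\<lambda>v. if v = r then return_pmf Pos else vupdate a b n f v)"

definition init_state :: "nat \<Rightarrow> nat \<Rightarrow> label" where
  "init_state r = (\<lambda>v. if v = r then Pos else Bot)"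

definition converged :: "nat \<Rightarrow> (nat \<Rightarrow> label) \<Rightarrow> bool" where
  "converged n f \<longleftrightarrow> (\<forall>v<n. f v = Pos)"

text \<open>Law of (f_t, [\<exists>s<t. f_s all +1]).\<close>
fun proc :: "real \<Rightarrow> real \<Rightarrow> nat \<Rightarrow> nat \<Rightarrow> nat \<Rightarrow> ((nat \<Rightarrow> label) \<times> bool) pmf" where
  "proc a b n r 0 = return_pmf (init_state r, False)"
| "proc a b n r (Suc t) = proc a b n r t \<bind>
      (\<lambda>(f, h). map_pmf (\<lambda>g. (g, h \<or> converged n f)) (step a b n r f))"

text \<open>Pr[tau_conv \<ge> T] = Pr[f_s not all +1 for every s < T] (tau_conv = \<infinity> allowed).\<close>
definition prob_tau_ge :: "real \<Rightarrow> real \<Rightarrow> nat \<Rightarrow> nat \<Rightarrow> nat \<Rightarrow> real" where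
  "prob_tau_ge a b n r T = measure_pmf.prob (proc a b n r T) {x. \<not> snd x}"

end

theory Submission
  imports Defs
begin

text \<open>Let \<open>M t\<close> be the number of vertices labelled \<open>-1\<close> at time \<open>t\<close>. In the first round every
  non-root vertex sees only the root and copies its \<open>+1\<close> with flip probability \<open>a\<close>, so
  \<open>E[M 1] = (n - 1) a\<close>. From then on all vertices are labelled, and each non-root vertex adopts
  the label of a uniformly random other vertex with probability \<open>b\<close>; since the root stays \<open>+1\<close>,
  \<open>E[M (t + 1) | f t] = (1 - b/(n - 1)) M t\<close>. Converged states have \<open>M = 0\<close>, so the same
  recursion holds for \<open>M t\<close> restricted to runs that have not converged before \<open>t\<close>. For
  \<open>t \<le> n/4\<close> Bernoulli's inequality keeps this restricted expectation above \<open>(n - 1) a / 2\<close>, and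
  since \<open>M t \<le> n\<close> the probability of not having converged is at least \<open>a/4\<close>.\<close>

lemma expectation_bind_pmf:
  fixes f :: "'b \<Rightarrow> real"
  assumes "\<And>y. \<bar>f y\<bar> \<le> B"
  shows "measure_pmf.expectation (bind_pmf M N) f
       = measure_pmf.expectation M (\<lambda>x. measure_pmf.expectation (N x) f)"
  unfolding measure_pmf_bind
  by (rule integral_bind[where K="count_space UNIV" and B=B and B'=1])
     (use assms in \<open>auto simp: measure_pmf.emeasure_space_1
        intro!: measure_pmf.finite_measure_axioms measure_pmf_in_subprob_algebra\<close>)

lemma expectation_of_bool_eq_pmf_map:
  "measure_pmf.expectation p (\<lambda>x. of_bool (g x = y)) = pmf (map_pmf g p) y"
proof -
  have "measure_pmf.expectation p (\<lambda>x. of_bool (g x = y))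
      = measure_pmf.expectation p (indicator (g -` {y}))"
    by (rule Bochner_Integration.integral_cong) (auto simp: indicator_def)
  also have "\<dots> = pmf (map_pmf g p) y"
    by (simp add: pmf_map)
  finally show ?thesis .
qed

lemma half_le_power_one_minus:
  fixes x :: real
  assumes "x \<le> 1" "real k * x \<le> 1/2"
  shows "1/2 \<le> (1 - x) ^ k"
  using Bernoulli_inequality[of "- x" k] assms by simp

lemma finite_nbrs [simp]: "finite (nbrs n f v)"
  unfolding nbrs_def by (rule finite_subset[of _ "{..<n}"]) auto

lemma pmf_vupdate_Neg_labelled:
  assumes "f v \<noteq> Bot" "nbrs n f v \<noteq> {}" "0 \<le> b" "b \<le> 1"
  shows "pmf (vupdate a b n f v) Neg
       = b * (\<Sum>u\<in>nbrs n f v. of_bool (f u = Neg)) / card (nbrs n f v)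
         + (1 - b) * of_bool (f v = Neg)"
proof -
  have "pmf (vupdate a b n f v) Neg
      = (\<Sum>u\<in>nbrs n f v. b * of_bool (f u = Neg) + (1 - b) * of_bool (f v = Neg))
        / card (nbrs n f v)"
    using assms by (simp add: vupdate_def pmf_bind integral_pmf_of_set indicator_def mult.commute)
  also have "\<dots> = b * (\<Sum>u\<in>nbrs n f v. of_bool (f u = Neg)) / card (nbrs n f v)
         + (1 - b) * of_bool (f v = Neg)"
    using assms by (simp add: sum.distrib sum_distrib_left add_divide_distrib card_gt_0_iff)
  finally show ?thesis .
qed

lemma pmf_vupdate_Neg_first_contact:
  assumes "f v = Bot" "nbrs n f v = {r}" "f r = Pos" "0 \<le> a" "a \<le> 1"
  shows "pmf (vupdate a b n f v) Neg = a"
  using assms by (simp add: vupdate_def pmf_bind pmf_of_set_singleton)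

definition neg_count :: "nat \<Rightarrow> (nat \<Rightarrow> label) \<Rightarrow> real" where
  "neg_count n f = (\<Sum>v<n. of_bool (f v = Neg))"

lemma neg_count_bounds: "0 \<le> neg_count n f" "neg_count n f \<le> n"
proof -
  show "0 \<le> neg_count n f" unfolding neg_count_def by (rule sum_nonneg) simp
  have "neg_count n f \<le> (\<Sum>v<n. 1)" unfolding neg_count_def by (rule sum_mono) simp
  then show "neg_count n f \<le> n" by simp
qed

lemma expectation_neg_count_step:
  assumes "r < n"
  shows "measure_pmf.expectation (step a b n r f) (neg_count n)
       = (\<Sum>v\<in>{..<n} - {r}. pmf (vupdate a b n f v) Neg)"
proof -
  have "measure_pmf.expectation (step a b n r f) (neg_count n)
      = (\<Sum>v<n. measure_pmf.expectation (step a b n r f) (\<lambda>g. of_bool (g v = Neg)))"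
    unfolding neg_count_def
    by (rule Bochner_Integration.integral_sum)
       (auto intro!: measure_pmf.integrable_const_bound[where B=1])
  also have "\<dots> = (\<Sum>v<n. pmf (if v = r then return_pmf Pos else vupdate a b n f v) Neg)"
    by (simp add: expectation_of_bool_eq_pmf_map step_def Pi_pmf_component)
  also have "\<dots> = (\<Sum>v\<in>{..<n} - {r}. pmf (vupdate a b n f v) Neg)"
    using assms by (simp add: sum.remove[of "{..<n}" r])
  finally show ?thesis .
qed

lemma vupdate_not_Bot:
  assumes "r < n" "v \<noteq> r" "f r = Pos" "l \<in> set_pmf (vupdate a b n f v)"
  shows "l \<noteq> Bot"
proof -
  have "nbrs n f v \<noteq> {}" using assms by (auto simp: nbrs_def)
  moreover have "\<And>w. w \<in> nbrs n f v \<Longrightarrow> Bot \<noteq> f w" by (auto simp: nbrs_def)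
  moreover have "(Bot = lneg x) = (Bot = x)" for x by (cases x) auto
  ultimately show ?thesis using assms(4) unfolding vupdate_def
    by (auto split: if_splits)
qed

lemma step_labelled:
  assumes "r < n" "f r = Pos" "g \<in> set_pmf (step a b n r f)"
  shows "g r = Pos" "\<forall>v<n. g v \<noteq> Bot"
proof -
  have g: "g v \<in> set_pmf (if v = r then return_pmf Pos else vupdate a b n f v)" if "v < n" for v
    using assms(3) that by (auto simp: step_def set_Pi_pmf PiE_dflt_def)
  show "g r = Pos" using g[OF assms(1)] by simp
  show "\<forall>v<n. g v \<noteq> Bot"
  proof (intro allI impI)
    fix v assume "v < n"
    then show "g v \<noteq> Bot"
      using g[of v] vupdate_not_Bot[of r n v f] assms(1,2) by (cases "v = r") auto
  qed
qed

lemma proc_labelled: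
  assumes "r < n" "(f, h) \<in> set_pmf (proc a b n r t)"
  shows "f r = Pos" "0 < t \<Longrightarrow> \<forall>v<n. f v \<noteq> Bot"
proof -
  have "f r = Pos \<and> (0 < t \<longrightarrow> (\<forall>v<n. f v \<noteq> Bot))"
    using assms(2)
  proof (induction t arbitrary: f h)
    case 0
    then show ?case by (simp add: init_state_def)
  next
    case (Suc t)
    then obtain f' h' where "(f', h') \<in> set_pmf (proc a b n r t)" "f \<in> set_pmf (step a b n r f')"
      by force
    then show ?case using Suc.IH step_labelled[OF assms(1)] by blast
  qed
  then show "f r = Pos" "0 < t \<Longrightarrow> \<forall>v<n. f v \<noteq> Bot" by auto
qed

lemma expectation_neg_count_step_labelled:
  assumes "r < n" "2 \<le> n" "f r = Pos" "\<forall>v<n. f v \<noteq> Bot" "0 \<le> b" "b \<le> 1"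
  shows "measure_pmf.expectation (step a b n r f) (neg_count n)
       = (1 - b / (real n - 1)) * neg_count n f"
proof -
  define m where "m = neg_count n f"
  define i where "i v = (of_bool (f v = Neg) :: real)" for v
  have m_sum: "m = (\<Sum>v<n. i v)" by (simp add: m_def neg_count_def i_def)
  have nbrs: "nbrs n f v = {..<n} - {v}" if "v < n" for v
    using assms(4) that by (auto simp: nbrs_def)
  have n1: "real (card ({..<n} - {v})) = real n - 1" if "v < n" for v
    using that by simp
  have "measure_pmf.expectation (step a b n r f) (neg_count n)
      = (\<Sum>v\<in>{..<n} - {r}. b * (m - i v) / (real n - 1) + (1 - b) * i v)"
  proof (unfold expectation_neg_count_step[OF assms(1)], rule sum.cong[OF refl])
    fix v assume v: "v \<in> {..<n} - {r}"
    have "nbrs n f v \<noteq> {}" using nbrs[of v] v assms(1) by auto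
    moreover have "(\<Sum>u\<in>{..<n} - {v}. i u) = m - i v"
      using v by (simp add: m_sum sum_diff1)
    ultimately show "pmf (vupdate a b n f v) Neg = b * (m - i v) / (real n - 1) + (1 - b) * i v"
      using v assms pmf_vupdate_Neg_labelled[of f v n b a] nbrs[of v] n1[of v] by (simp add: i_def)
  qed
  also have "\<dots> = b * ((real n - 1) * m - m) / (real n - 1) + (1 - b) * m"
  proof -
    let ?R = "{..<n} - {r}"
    have "i r = 0" using assms(3) by (simp add: i_def)
    then have sum_i: "(\<Sum>v\<in>?R. i v) = m"
      using assms(1) by (simp add: m_sum sum_diff1)
    have "(\<Sum>v\<in>?R. b * (m - i v) / (real n - 1) + (1 - b) * i v)
        = b * (\<Sum>v\<in>?R. m - i v) / (real n - 1) + (1 - b) * (\<Sum>v\<in>?R. i v)"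
      by (simp add: sum.distrib sum_distrib_left flip: sum_divide_distrib)
    also have "(\<Sum>v\<in>?R. m - i v) = (real n - 1) * m - m"
      using n1[OF assms(1)] sum_i by (simp add: sum_subtractf)
    finally show ?thesis using sum_i by simp
  qed
  also have "\<dots> = (1 - b / (real n - 1)) * m"
    using assms(2) by (simp add: field_simps)
  finally show ?thesis unfolding m_def .
qed

definition unconverged_neg_count :: "real \<Rightarrow> real \<Rightarrow> nat \<Rightarrow> nat \<Rightarrow> nat \<Rightarrow> real" where
  "unconverged_neg_count a b n r t =
     measure_pmf.expectation (proc a b n r t) (\<lambda>(f, h). if h then 0 else neg_count n f)"

lemma unconverged_neg_count_one:
  assumes "r < n" "2 \<le> n" "0 \<le> a" "a \<le> 1"
  shows "unconverged_neg_count a b n r 1 = (real n - 1) * a"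
proof -
  have "\<not> converged n (init_state r)"
  proof -
    have "(if r = 0 then 1 else 0) < n" using assms(1,2) by auto
    then show ?thesis by (auto simp: converged_def init_state_def split: if_splits)
  qed
  then have "unconverged_neg_count a b n r 1
      = measure_pmf.expectation (step a b n r (init_state r)) (neg_count n)"
    unfolding unconverged_neg_count_def One_nat_def proc.simps by (simp add: bind_return_pmf)
  also have "\<dots> = (\<Sum>v\<in>{..<n} - {r}. a)"
    unfolding expectation_neg_count_step[OF assms(1)]
  proof (rule sum.cong[OF refl])
    fix v assume "v \<in> {..<n} - {r}"
    then have "nbrs n (init_state r) v = {r}"
      using assms(1) by (auto simp: nbrs_def init_state_def)
    with \<open>v \<in> {..<n} - {r}\<close> show "pmf (vupdate a b n (init_state r) v) Neg = a"
      using assms(3,4) by (intro pmf_vupdate_Neg_first_contact) (auto simp: init_state_def)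
  qed
  also have "\<dots> = (real n - 1) * a"
    using assms(1) by simp
  finally show ?thesis .
qed

lemma unconverged_neg_count_Suc:
  assumes "r < n" "2 \<le> n" "0 \<le> b" "b \<le> 1" "0 < t"
  shows "unconverged_neg_count a b n r (Suc t)
       = (1 - b / (real n - 1)) * unconverged_neg_count a b n r t"
proof -
  let ?F = "\<lambda>(f, h). if h then 0 else neg_count n f"
  let ?K = "\<lambda>(f, h). map_pmf (\<lambda>g. (g, h \<or> converged n f)) (step a b n r f)"
  let ?c = "1 - b / (real n - 1)"
  have F_bound: "\<bar>?F x\<bar> \<le> n" for x
    using neg_count_bounds[of n "fst x"] by (auto split: prod.split)
  have "unconverged_neg_count a b n r (Suc t)
      = measure_pmf.expectation (proc a b n r t) (\<lambda>x. measure_pmf.expectation (?K x) ?F)"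
    unfolding unconverged_neg_count_def proc.simps by (rule expectation_bind_pmf[OF F_bound])
  also have "\<dots> = measure_pmf.expectation (proc a b n r t) (\<lambda>x. ?c * ?F x)"
  proof (rule integral_cong_AE)
    show "AE x in measure_pmf (proc a b n r t). measure_pmf.expectation (?K x) ?F = ?c * ?F x"
    proof (rule AE_pmfI)
      fix x assume x: "x \<in> set_pmf (proc a b n r t)"
      obtain f h where x_eq: "x = (f, h)" by (cases x)
      have "f r = Pos" "\<forall>v<n. f v \<noteq> Bot"
        using proc_labelled[OF assms(1)] assms(5) x unfolding x_eq by auto
      moreover have "converged n f \<Longrightarrow> neg_count n f = 0"
        by (simp add: converged_def neg_count_def)
      ultimately show "measure_pmf.expectation (?K x) ?F = ?c * ?F x"
        using expectation_neg_count_step_labelled[OF assms(1,2) _ _ assms(3,4), of f a]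
        unfolding x_eq by (cases h; cases "converged n f") auto
    qed
  qed simp_all
  finally show ?thesis by (simp add: unconverged_neg_count_def)
qed

lemma unconverged_neg_count_eq:
  assumes "r < n" "2 \<le> n" "0 \<le> a" "a \<le> 1" "0 \<le> b" "b \<le> 1"
  shows "unconverged_neg_count a b n r (Suc t) = (real n - 1) * a * (1 - b / (real n - 1)) ^ t"
proof (induction t)
  case 0
  then show ?case using unconverged_neg_count_one[OF assms(1-4)] by simp
next
  case (Suc t)
  then show ?case using unconverged_neg_count_Suc[OF assms(1,2,5,6), of "Suc t" a] by simp
qed

lemma unconverged_neg_count_le_prob_tau_ge:
  "unconverged_neg_count a b n r t \<le> real n * prob_tau_ge a b n r t"
proof -
  have "unconverged_neg_count a b n r t
      \<le> measure_pmf.expectation (proc a b n r t) (\<lambda>x. real n * indicator {x. \<not> snd x} x)"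
    unfolding unconverged_neg_count_def
  proof (rule integral_mono)
    fix x :: "(nat \<Rightarrow> label) \<times> bool"
    show "(case x of (f, h) \<Rightarrow> if h then 0 else neg_count n f) \<le> real n * indicator {x. \<not> snd x} x"
      using neg_count_bounds[of n "fst x"] by (auto simp: indicator_def split: prod.split)
  qed (auto intro!: measure_pmf.integrable_const_bound[where B="real n"] split: prod.split
        simp: indicator_def neg_count_bounds)
  also have "\<dots> = real n * prob_tau_ge a b n r t"
    by (simp add: prob_tau_ge_def)
  finally show ?thesis .
qed

lemma prob_tau_ge_Suc_lower_bound:
  assumes "r < n" "2 \<le> n" "0 \<le> a" "a \<le> 1" "0 \<le> b" "b \<le> 1"
  shows "(real n - 1) / real n * (1 - b / (real n - 1)) ^ k * a \<le> prob_tau_ge a b n r (Suc k)"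
  using unconverged_neg_count_le_prob_tau_ge[of a b n r "Suc k"]
    unconverged_neg_count_eq[OF assms, of k] assms(2)
  by (simp add: divide_le_eq mult.commute mult.left_commute)

lemma prob_tau_ge_linear_time:
  assumes "r < n" "2 \<le> n" "0 \<le> a" "a \<le> 1" "0 \<le> b" "b \<le> 1"
  shows "1/4 * a \<le> prob_tau_ge a b n r (nat \<lceil>1/4 * real n\<rceil>)"
proof -
  define k where "k = nat \<lceil>1/4 * real n\<rceil> - 1"
  have T: "nat \<lceil>1/4 * real n\<rceil> = Suc k" and k: "real k \<le> real n / 4"
    using assms(2) unfolding k_def by linarith+
  define x where "x = b / (real n - 1)"
  have "real k * b \<le> real k" using assms(6) by (simp add: mult_left_le)
  moreover have "real n / 4 \<le> (real n - 1) / 2" using assms(2) by simp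
  ultimately have "real k * b \<le> (real n - 1) / 2" using k by linarith
  then have "1/2 \<le> (1 - x) ^ k"
    using assms(2,6) by (intro half_le_power_one_minus) (simp_all add: x_def field_simps)
  moreover have "1/2 \<le> (real n - 1) / real n" using assms(2) by (simp add: field_simps)
  ultimately have "1/4 \<le> (real n - 1) / real n * (1 - x) ^ k"
    using mult_mono[of "1/2" "(real n - 1) / real n" "1/2" "(1 - x) ^ k"] assms(2) by simp
  then have "1/4 * a \<le> (real n - 1) / real n * (1 - x) ^ k * a"
    by (rule mult_right_mono) (use assms(3) in simp)
  also have "\<dots> \<le> prob_tau_ge a b n r (nat \<lceil>1/4 * real n\<rceil>)"
    unfolding T x_def by (rule prob_tau_ge_Suc_lower_bound[OF assms])
  finally show ?thesis .
qed

theorem mainTheorem17: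
  fixes a b :: real
  assumes "0 < a" "a < 1/2" "0 < b" "b < 1"
  shows "\<exists>c1>0. \<exists>c2>0. \<exists>N. \<forall>n\<ge>N. \<forall>r<n.
           prob_tau_ge a b n r (nat \<lceil>c2 * real n\<rceil>) \<ge> c1 * a"
proof (intro exI[of _ "1/4"] exI[of _ "1/4"] exI[of _ 2] conjI allI impI)
  fix n r :: nat
  assume "2 \<le> n" "r < n"
  then show "1/4 * a \<le> prob_tau_ge a b n r (nat \<lceil>1/4 * real n\<rceil>)"
    using assms by (intro prob_tau_ge_linear_time) simp_all
qed simp_all

end
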